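(* Consider the symmetric two-cell load coupling model described in the context, and let $\bm{\kappa}=(\kappa_1,\dots,\kappa_{2m})\in\{0,1\}^{2m}$ be a JT pattern such that $\kappa_j=\kappa_{m+j}$ for all $j\in\{1,\dots,m\}$. Suppose the coupled system for $\bm{\kappa}$ has a fixed point $(x_1,x_2)$ with $x_1,x_2>0$ (the load at convergence). Then the UE loads evaluated at this fixed point satisfy $y_j=y_{m+j}$ for every $j\in\{1,\dots,m\}$.
   Context: Two-cell model: there are two cells (cell 1 and cell 2) and $2m$ UEs indexed $1,\dots,2m$; UEs $1,\dots,m$ are (originally) served by cell 1 and UEs $m+1,\dots,2m$ by cell 2. Transmit powers per resource block satisfy $p_1=p_2=p>0$; channel gains $g_{ij}>0$ satisfy $g_{1,j}=g_{2,m+j}$ and $g_{1,m+j}=g_{2,j}$ for all $j\in\{1,\dots,m\}$; user demands satisfy $d_j=d_{m+j}>0$; the noise power is $\sigma^2>0$. For each UE $j$ define the constant $c_j=\dfrac{d_j}{\log_2\left(1+\frac{p_1g_{1j}+p_2g_{2j}}{\sigma^2}\right)}$. A JT pattern is $\bm{\kappa}\in\{0,1\}^{2m}$, where $\kappa_j=1$ means UE $j$ is served jointly by both cells. Given $\bm\kappa$ and loads $x_1,x_2$, the UE loads are $y_j=\dfrac{(1-\kappa_j)d_j}{\log_2\left(1+\frac{p_1g_{1j}}{p_2g_{2j}x_2+\sigma^2}\right)}+c_j\kappa_j$ for $j\in\{1,\dots,m\}$ and $y_j=\dfrac{(1-\kappa_j)d_j}{\log_2\left(1+\frac{p_2g_{2j}}{p_1g_{1j}x_1+\sigma^2}\right)}+c_j\kappa_j$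 for $j\in\{m+1,\dots,2m\}$, and the cell loads are coupled via $x_1=\sum_{j=1}^m y_j$, $x_2=\sum_{j=m+1}^{2m}y_j$. The load at convergence for $\bm\kappa$ is a solution $(x_1,x_2)$ of this coupled system (unique when it exists). *)

theory Defs
  imports "HOL-Analysis.Analysis"
begin

text \<open>Two-cell load coupling model. Cells are indexed 1 and 2, UEs 1..2m.
  g i j is the channel gain from cell i to UE j.\<close>

definition jt_const :: "real \<Rightarrow> real \<Rightarrow> (nat \<Rightarrow> nat \<Rightarrow> real) \<Rightarrow> (nat \<Rightarrow> real) \<Rightarrow> real \<Rightarrow> nat \<Rightarrow> real" where
  "jt_const p1 p2 g d \<sigma>2 j = d j / log 2 (1 + (p1 * g 1 j + p2 * g 2 j) / \<sigma>2)"

definition ue_load :: "nat \<Rightarrow> real \<Rightarrow> real \<Rightarrow> (nat \<Rightarrow> nat \<Rightarrow> real) \<Rightarrow> (nat \<Rightarrow> real) \<Rightarrow> real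
      \<Rightarrow> (nat \<Rightarrow> real) \<Rightarrow> real \<Rightarrow> real \<Rightarrow> nat \<Rightarrow> real" where
  "ue_load m p1 p2 g d \<sigma>2 \<kappa> x1 x2 j =
     (if j \<le> m then
        (1 - \<kappa> j) * d j / log 2 (1 + p1 * g 1 j / (p2 * g 2 j * x2 + \<sigma>2))
      else
        (1 - \<kappa> j) * d j / log 2 (1 + p2 * g 2 j / (p1 * g 1 j * x1 + \<sigma>2)))
     + jt_const p1 p2 g d \<sigma>2 j * \<kappa> j"

definition is_fixed_point :: "nat \<Rightarrow> real \<Rightarrow> real \<Rightarrow> (nat \<Rightarrow> nat \<Rightarrow> real) \<Rightarrow> (nat \<Rightarrow> real) \<Rightarrow> real
      \<Rightarrow> (nat \<Rightarrow> real) \<Rightarrow> real \<Rightarrow> real \<Rightarrow> bool" where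
  "is_fixed_point m p1 p2 g d \<sigma>2 \<kappa> x1 x2 \<longleftrightarrow>
     x1 = (\<Sum>j=1..m. ue_load m p1 p2 g d \<sigma>2 \<kappa> x1 x2 j) \<and>
     x2 = (\<Sum>j=m+1..2*m. ue_load m p1 p2 g d \<sigma>2 \<kappa> x1 x2 j)"

end

theory Submission
  imports Defs
begin

text \<open>Under the symmetry, UE \<open>m + j\<close> sees cell 1's load exactly as UE \<open>j\<close> sees
  cell 2's, so both fixed-point equations are \<open>x\<^sub>1 = F x\<^sub>2\<close> and \<open>x\<^sub>2 = F x\<^sub>1\<close> for one
  function \<open>F\<close>. Each UE load grows with the interfering load, so \<open>F\<close> is monotone, and
  a monotone \<open>F\<close> swapping two points must fix them: \<open>x\<^sub>1 < x\<^sub>2\<close> would give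
  \<open>x\<^sub>2 = F x\<^sub>1 \<le> F x\<^sub>2 = x\<^sub>1\<close>.\<close>

lemma mono_on_swap_eq:
  fixes F :: "'a :: linorder \<Rightarrow> 'a"
  assumes "mono_on S F" and "x \<in> S" and "y \<in> S"
    and "x = F y" and "y = F x"
  shows "x = y"
proof (cases x y rule: linorder_cases)
  case less
  then have "F x \<le> F y" using assms(1-3) by (auto intro: mono_onD)
  then have "y \<le> x" by (simp only: assms(4,5)[symmetric])
  with less show ?thesis by simp
next
  case greater
  then have "F y \<le> F x" using assms(1-3) by (auto intro: mono_onD)
  then have "x \<le> y" by (simp only: assms(4,5)[symmetric])
  with greater show ?thesis by simp
qed simp

lemma interference_load_mono:
  fixes a b \<sigma>2 k :: real
  assumes "a > 0" and "b > 0" and "\<sigma>2 > 0" and "k \<ge> 0"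
  shows "mono_on {0<..} (\<lambda>t. k / log 2 (1 + a / (b * t + \<sigma>2)))"
proof (rule mono_onI)
  fix s t :: real
  assume "s \<in> {0<..}" and "s \<le> t"
  then have "0 < b * s + \<sigma>2" and "b * s + \<sigma>2 \<le> b * t + \<sigma>2"
    using assms(2,3) by (auto intro: add_pos_pos)
  then have "0 < a / (b * t + \<sigma>2)" and "a / (b * t + \<sigma>2) \<le> a / (b * s + \<sigma>2)"
    using assms(1) by (auto intro: divide_left_mono)
  then have "0 < log 2 (1 + a / (b * t + \<sigma>2))"
    and "log 2 (1 + a / (b * t + \<sigma>2)) \<le> log 2 (1 + a / (b * s + \<sigma>2))"
    by auto
  then show "k / log 2 (1 + a / (b * s + \<sigma>2)) \<le> k / log 2 (1 + a / (b * t + \<sigma>2))"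
    using assms(4) by (intro divide_left_mono) auto
qed

lemma sum_upper_half_shift:
  fixes y :: "nat \<Rightarrow> 'a :: comm_monoid_add"
  shows "(\<Sum>j=m+1..2*m. y j) = (\<Sum>j=1..m. y (m + j))"
proof -
  have "(\<Sum>j=m+1..2*m. y j) = (\<Sum>j=1+m..m+m. y j)"
    by (simp add: mult_2 add.commute)
  also have "\<dots> = (\<Sum>j=1..m. y (j + m))"
    by (rule sum.shift_bounds_cl_nat_ivl)
  finally show ?thesis
    by (simp add: add.commute)
qed

definition ue_load_cell1 ::
    "real \<Rightarrow> (nat \<Rightarrow> nat \<Rightarrow> real) \<Rightarrow> (nat \<Rightarrow> real) \<Rightarrow> real \<Rightarrow> (nat \<Rightarrow> real) \<Rightarrow> nat \<Rightarrow> real \<Rightarrow> real"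
  where "ue_load_cell1 p g d \<sigma>2 \<kappa> j t =
    (1 - \<kappa> j) * d j / log 2 (1 + p * g 1 j / (p * g 2 j * t + \<sigma>2))
      + jt_const p p g d \<sigma>2 j * \<kappa> j"

lemma ue_load_lower:
  assumes "j \<le> m"
  shows "ue_load m p p g d \<sigma>2 \<kappa> x1 x2 j = ue_load_cell1 p g d \<sigma>2 \<kappa> j x2"
  using assms by (simp add: ue_load_def ue_load_cell1_def)

lemma ue_load_upper_symmetric:
  assumes "1 \<le> j" and "g 1 j = g 2 (m + j)" and "g 1 (m + j) = g 2 j"
    and "d j = d (m + j)" and "\<kappa> j = \<kappa> (m + j)"
  shows "ue_load m p p g d \<sigma>2 \<kappa> x1 x2 (m + j) = ue_load_cell1 p g d \<sigma>2 \<kappa> j x1"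
proof -
  have "jt_const p p g d \<sigma>2 (m + j) = jt_const p p g d \<sigma>2 j"
    using assms(2-4) by (simp add: jt_const_def add.commute)
  then show ?thesis
    using assms by (simp add: ue_load_def ue_load_cell1_def mult.commute)
qed

lemma ue_load_cell1_mono:
  assumes "p > 0" and "\<sigma>2 > 0" and "g 1 j > 0" and "g 2 j > 0"
    and "d j > 0" and "\<kappa> j \<in> {0, 1}"
  shows "mono_on {0<..} (ue_load_cell1 p g d \<sigma>2 \<kappa> j)"
proof -
  have "0 \<le> (1 - \<kappa> j) * d j"
    using assms(5,6) by auto
  then have "mono_on {0<..} (\<lambda>t. (1 - \<kappa> j) * d j / log 2 (1 + p * g 1 j / (p * g 2 j * t + \<sigma>2)))"
    using assms(1-4) by (intro interference_load_mono) auto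
  then show ?thesis
    unfolding ue_load_cell1_def mono_on_def by auto
qed

theorem lemma1:
  fixes m :: nat and p1 p2 p \<sigma>2 x1 x2 :: real
    and g :: "nat \<Rightarrow> nat \<Rightarrow> real" and d \<kappa> :: "nat \<Rightarrow> real"
  assumes "p > 0" and "p1 = p" and "p2 = p"
    and "\<sigma>2 > 0"
    and "\<And>i j. i \<in> {1, 2} \<Longrightarrow> j \<in> {1..2*m} \<Longrightarrow> g i j > 0"
    and "\<And>j. j \<in> {1..m} \<Longrightarrow> g 1 j = g 2 (m + j) \<and> g 1 (m + j) = g 2 j"
    and "\<And>j. j \<in> {1..m} \<Longrightarrow> d j = d (m + j)"
    and "\<And>j. j \<in> {1..2*m} \<Longrightarrow> d j > 0"
    and "\<And>j. j \<in> {1..2*m} \<Longrightarrow> \<kappa> j \<in> {0, 1}"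
    and "\<And>j. j \<in> {1..m} \<Longrightarrow> \<kappa> j = \<kappa> (m + j)"
    and "is_fixed_point m p1 p2 g d \<sigma>2 \<kappa> x1 x2"
    and "x1 > 0" and "x2 > 0"
  shows "\<forall>j\<in>{1..m}. ue_load m p1 p2 g d \<sigma>2 \<kappa> x1 x2 j = ue_load m p1 p2 g d \<sigma>2 \<kappa> x1 x2 (m + j)"
proof -
  define F where "F t = (\<Sum>j=1..m. ue_load_cell1 p g d \<sigma>2 \<kappa> j t)" for t
  let ?y = "ue_load m p p g d \<sigma>2 \<kappa> x1 x2"
  have lower: "?y j = ue_load_cell1 p g d \<sigma>2 \<kappa> j x2" if "j \<in> {1..m}" for j
    using that by (simp add: ue_load_lower)
  have upper: "?y (m + j) = ue_load_cell1 p g d \<sigma>2 \<kappa> j x1" if "j \<in> {1..m}" for j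
    using that assms(6,7,10) by (intro ue_load_upper_symmetric) auto
  have "x1 = (\<Sum>j=1..m. ?y j)" and "x2 = (\<Sum>j=1..m. ?y (m + j))"
    using assms(2,3,11) sum_upper_half_shift[of ?y m] by (simp_all add: is_fixed_point_def)
  then have fixed: "x1 = F x2" "x2 = F x1"
    unfolding F_def using lower upper by (metis (no_types, lifting) sum.cong)+
  have "mono_on {0<..} (ue_load_cell1 p g d \<sigma>2 \<kappa> j)" if "j \<in> {1..m}" for j
    using that assms(5,8,9) by (intro ue_load_cell1_mono[OF assms(1,4)]) auto
  then have "mono_on {0<..} F"
    unfolding F_def mono_on_def by (auto intro!: sum_mono)
  moreover have "x1 \<in> {0<..}" and "x2 \<in> {0<..}"
    using assms(12,13) by simp_all
  ultimately have "x1 = x2"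
    using fixed by (rule mono_on_swap_eq)
  then show ?thesis
    using assms(2,3) lower upper by simp
qed

end
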